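(* For every block $i\in\{1,\dots,N\}$, the function $\hat u_i^*(\epsilon)=\sum_{\gamma_G,\gamma_H\in\{H_1,\dots,H_K\}}u_i^*(\langle\epsilon,\gamma_G,\gamma_H\rangle)$ is non-increasing in the battery energy state $\epsilon$.
   Context: Finite-horizon MDP with $N$ blocks of length $\tau>0$. Parameters: $B_m>0$, positive integers $M,K$; channel levels $0<H_1<\dots<H_K$; $R,W,\sigma^2,g_0,\theta,d_G,d_H>0$; $p_G^{\max},p_H^{\max}>0$; weights $w_G,w_D>0$; $E_{H}$ a random variable with density $f_{E_H}$ on $[0,E_m]$. A state is $s=\langle\epsilon,\gamma_G,\gamma_H\rangle$ with $\epsilon\in\{(2m-1)B_m/(2M): m=1,\dots,M\}$ and $\gamma_G,\gamma_H\in\{H_1,\dots,H_K\}$. Let $p^{inv}_j(s)=(2^{R/(W\tau)}-1)\sigma^2(g_0 d_j^{-\theta}\gamma_j)^{-1}$ for $j\in\{G,H\}$, $\kappa=\min\{p_G^{\max},w_D(w_G\tau)^{-1}\}$, and $c(s)=w_D$ if $p^{inv}_G(s)>\kappa$, $c(s)=w_G p^{inv}_G(s)\tau$ otherwise. The allowable actions are $\mathcal{A}_s=\{0\}$ if $p^{inv}_H(s)>\min\{\epsilon/\tau,p_H^{\max}\}$ and $\mathcal{A}_s=\{0,1\}$ otherwise; the cost is $c(s,\alpha)=(1-\alpha)c(s)$. Transitions: given $s$ and $\alpha$, the next channel states $\gamma_G',\gamma_H'$ are independent, each uniform on $\{H_1,\dots,H_K\}$, independent of the next energy state $\epsilon'=Q(\epsilon-\alpha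 p^{inv}_H(s)\tau+E_H)$, where $Q(\varepsilon)=\big(2\min\{\lfloor M\min\{\varepsilon,B_m\}/B_m\rfloor+1,M\}-1\big)B_m/(2M)$; denote the resulting transition probability $p(s'|s,\alpha)$. Optimal cost-to-go functions: $u_N^*(s)=\min_{\alpha\in\mathcal{A}_s}c(s,\alpha)$ and, for $i<N$, $u_i^*(s)=\min_{\alpha\in\mathcal{A}_s}\{c(s,\alpha)+\sum_{s'}p(s'|s,\alpha)u_{i+1}^*(s')\}$. *)

theory Defs
  imports "HOL-Analysis.Analysis"
begin

text \<open>System parameters of the finite-horizon MDP.  Channel levels are
  H 1 < ... < H K; the energy-harvesting random variable E_H has density fE
  (supported on [0, Em]).\<close>

record params =
  Bm :: real
  Mq :: nat
  Kc :: nat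
  Hl :: "nat \<Rightarrow> real"
  Rr :: real
  Ww :: real
  sigma2 :: real
  g0 :: real
  theta :: real
  dG :: real
  dH :: real
  pGmax :: real
  pHmax :: real
  wG :: real
  wD :: real
  tau :: real
  Em :: real
  fE :: "real \<Rightarrow> real"

type_synonym state = "real \<times> real \<times> real"  \<comment> \<open>(epsilon, gamma_G, gamma_H)\<close>

definition energy_levels :: "params \<Rightarrow> real set" where
  "energy_levels P = (\<lambda>m. (2 * real m - 1) * Bm P / (2 * real (Mq P))) ` {1..Mq P}"

definition channel_levels :: "params \<Rightarrow> real set" where
  "channel_levels P = Hl P ` {1..Kc P}"

definition states :: "params \<Rightarrow> state set" where
  "states P = energy_levels P \<times> channel_levels P \<times> channel_levels P"

definition pinv :: "params \<Rightarrow> real \<Rightarrow> real \<Rightarrow> real" where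
  "pinv P d \<gamma> = (2 powr (Rr P / (Ww P * tau P)) - 1) * sigma2 P / (g0 P * d powr (- theta P) * \<gamma>)"

definition pinvG :: "params \<Rightarrow> state \<Rightarrow> real" where
  "pinvG P s = pinv P (dG P) (fst (snd s))"

definition pinvH :: "params \<Rightarrow> state \<Rightarrow> real" where
  "pinvH P s = pinv P (dH P) (snd (snd s))"

definition kappa :: "params \<Rightarrow> real" where
  "kappa P = min (pGmax P) (wD P / (wG P * tau P))"

definition cost0 :: "params \<Rightarrow> state \<Rightarrow> real" where
  "cost0 P s = (if pinvG P s > kappa P then wD P else wG P * pinvG P s * tau P)"

definition actions :: "params \<Rightarrow> state \<Rightarrow> real set" where
  "actions P s = (if pinvH P s > min (fst s / tau P) (pHmax P) then {0} else {0, 1})"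

definition cost :: "params \<Rightarrow> state \<Rightarrow> real \<Rightarrow> real" where
  "cost P s \<alpha> = (1 - \<alpha>) * cost0 P s"

definition quant :: "params \<Rightarrow> real \<Rightarrow> real" where
  "quant P x = (2 * real_of_int (min (\<lfloor>real (Mq P) * min x (Bm P) / Bm P\<rfloor> + 1) (int (Mq P))) - 1)
                 * Bm P / (2 * real (Mq P))"

definition EH_dist :: "params \<Rightarrow> real measure" where
  "EH_dist P = density lborel (\<lambda>y. ennreal (fE P y))"

definition trans :: "params \<Rightarrow> state \<Rightarrow> real \<Rightarrow> state \<Rightarrow> real" where
  "trans P s \<alpha> s' =
     (if fst (snd s') \<in> channel_levels P \<and> snd (snd s') \<in> channel_levels P
      then 1 / real (Kc P) ^ 2 else 0)
     * measure (EH_dist P) {y. quant P (fst s - \<alpha> * pinvH P s * tau P + y) = fst s'}"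

text \<open>Cost-to-go with k remaining steps after the current one:
  u_i^* = Vk P (N - i).\<close>
fun Vk :: "params \<Rightarrow> nat \<Rightarrow> state \<Rightarrow> real" where
  "Vk P 0 s = Min ((\<lambda>\<alpha>. cost P s \<alpha>) ` actions P s)"
| "Vk P (Suc k) s = Min ((\<lambda>\<alpha>. cost P s \<alpha> + (\<Sum>s'\<in>states P. trans P s \<alpha> s' * Vk P k s')) ` actions P s)"

definition ustar :: "params \<Rightarrow> nat \<Rightarrow> nat \<Rightarrow> state \<Rightarrow> real" where
  "ustar P N i s = Vk P (N - i) s"

definition uhat :: "params \<Rightarrow> nat \<Rightarrow> nat \<Rightarrow> real \<Rightarrow> real" where
  "uhat P N i \<epsilon> = (\<Sum>gG\<in>channel_levels P. \<Sum>gH\<in>channel_levels P. ustar P N i (\<epsilon>, gG, gH))"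

end

theory Submission
  imports Defs
begin

text \<open>The stage cost does not depend on the battery level, a larger battery only enlarges the set
  of admissible actions, and the quantized next battery level is monotone in the current one.
  Backward induction over the horizon then shows that every cost-to-go function is antitone in
  the energy state for each fixed pair of channel states; summing over the channel states gives
  the claim.  The one analytic step is that E f(Q(x + E_H)) is antitone in x whenever f is
  antitone on the quantization levels and x \<ge> 0, since E_H \<ge> 0 almost surely.\<close>

lemma sum_level_sets_integral:
  fixes g :: "'a \<Rightarrow> real" and f :: "real \<Rightarrow> real"
  assumes "finite_measure M" and "g \<in> borel_measurable M"
  shows "integrable M (\<lambda>y. \<Sum>e\<in>L. f e * indicator {y \<in> space M. g y = e} y)"
    and "(\<integral>y. (\<Sum>e\<in>L. f e * indicator {y \<in> space M. g y = e} y) \<partial>M)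
           = (\<Sum>e\<in>L. measure M {y \<in> space M. g y = e} * f e)"
proof -
  interpret finite_measure M by fact
  have level: "{y \<in> space M. g y = e} \<in> sets M" for e
    using assms(2) by measurable
  then show "integrable M (\<lambda>y. \<Sum>e\<in>L. f e * indicator {y \<in> space M. g y = e} y)"
    by (intro Bochner_Integration.integrable_sum integrable_mult_right integrable_real_indicator)
      (simp_all add: less_top[symmetric])
  show "(\<integral>y. (\<Sum>e\<in>L. f e * indicator {y \<in> space M. g y = e} y) \<partial>M)
           = (\<Sum>e\<in>L. measure M {y \<in> space M. g y = e} * f e)"
  proof (subst Bochner_Integration.integral_sum)
    show "integrable M (\<lambda>y. f e * indicator {y \<in> space M. g y = e} y)" for e
      using level by (intro integrable_mult_right integrable_real_indicator) (simp_all add: less_top[symmetric])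
    show "(\<Sum>e\<in>L. \<integral>y. f e * indicator {y \<in> space M. g y = e} y \<partial>M)
            = (\<Sum>e\<in>L. measure M {y \<in> space M. g y = e} * f e)"
      using level by (simp add: mult.commute)
  qed
qed

lemma sum_level_indicators_eq:
  fixes f :: "'b \<Rightarrow> real"
  assumes "finite L" and "g y \<in> L" and "y \<in> A"
  shows "(\<Sum>e\<in>L. f e * indicator {y \<in> A. g y = e} y) = f (g y)"
proof -
  have "(\<Sum>e\<in>L. f e * indicator {y \<in> A. g y = e} y) = (\<Sum>e\<in>L. if e = g y then f e else 0)"
    using assms(3) by (intro sum.cong) (auto simp: indicator_def)
  then show ?thesis using assms(1,2) by simp
qed

lemma expected_antitone_of_shifted_quantizer:
  fixes M :: "real measure" and q f :: "real \<Rightarrow> real"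
  assumes "finite_measure M" and "sets M = sets borel" and "AE y in M. 0 \<le> y"
    and "finite L" and "q \<in> borel_measurable borel" and "mono q"
    and "\<And>z. 0 \<le> z \<Longrightarrow> q z \<in> L"
    and "\<And>a b. a \<in> L \<Longrightarrow> b \<in> L \<Longrightarrow> a \<le> b \<Longrightarrow> f b \<le> f a"
    and "0 \<le> x1" and "x1 \<le> x2"
  shows "(\<Sum>e\<in>L. measure M {y. q (x2 + y) = e} * f e)
           \<le> (\<Sum>e\<in>L. measure M {y. q (x1 + y) = e} * f e)"
proof -
  define F where "F x y = (\<Sum>e\<in>L. f e * indicator {y \<in> space M. q (x + y) = e} y)" for x y
  have space: "space M = UNIV"
    using sets_eq_imp_space_eq[OF assms(2)] by simp
  have "(\<lambda>y. q (x + y)) \<in> borel_measurable M" for x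
    using assms(5) unfolding measurable_cong_sets[OF assms(2) refl] by measurable
  note integral = sum_level_sets_integral[OF assms(1) this, where L = L and f = f, folded F_def]
  have F_eq: "F x y = f (q (x + y))" if "0 \<le> x + y" for x y
    unfolding F_def space
    by (rule sum_level_indicators_eq[where g = "\<lambda>y. q (x + y)", OF assms(4) assms(7)[OF that]]) simp
  have "AE y in M. F x2 y \<le> F x1 y"
    using assms(3)
  proof eventually_elim
    case (elim y)
    then have "0 \<le> x1 + y" and "0 \<le> x2 + y" and "x1 + y \<le> x2 + y"
      using assms(9,10) by auto
    then have "f (q (x2 + y)) \<le> f (q (x1 + y))"
      by (intro assms(8) assms(7) monoD[OF assms(6)])
    then show ?case
      by (simp add: F_eq \<open>0 \<le> x1 + y\<close> \<open>0 \<le> x2 + y\<close>)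
  qed
  then have "integral\<^sup>L M (F x2) \<le> integral\<^sup>L M (F x1)"
    by (intro integral_mono_AE integral(1))
  then show ?thesis
    using integral(2) by (simp add: space)
qed

lemma Min_image_antimono:
  fixes F G :: "'a \<Rightarrow> 'b::linorder"
  assumes "finite B" and "A \<subseteq> B" and "A \<noteq> {}" and "\<And>a. a \<in> A \<Longrightarrow> G a \<le> F a"
  shows "Min (G ` B) \<le> Min (F ` A)"
proof -
  have "finite A" using assms(1,2) finite_subset by blast
  then have "Min (F ` A) \<in> F ` A" using assms(3) by (intro Min_in) auto
  then obtain a where a: "a \<in> A" "Min (F ` A) = F a" by auto
  have "Min (G ` B) \<le> G a" using a assms(1,2) by (intro Min_le) auto
  also have "\<dots> \<le> F a" using assms(4) a by blast
  finally show ?thesis using a by simp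
qed

lemma finite_energy_levels: "finite (energy_levels P)"
  unfolding energy_levels_def by simp

lemma energy_levels_pos:
  assumes "Bm P > 0" and "e \<in> energy_levels P"
  shows "0 < e"
  using assms unfolding energy_levels_def by (auto intro!: divide_pos_pos mult_pos_pos)

lemma borel_measurable_quant: "quant P \<in> borel_measurable borel"
  unfolding quant_def by measurable

lemma mono_quant:
  assumes "Bm P > 0"
  shows "mono (quant P)"
proof (rule monoI)
  fix x y :: real
  assume "x \<le> y"
  then have "real (Mq P) * min x (Bm P) / Bm P \<le> real (Mq P) * min y (Bm P) / Bm P"
    using assms by (intro divide_right_mono mult_left_mono) auto
  then have "min (\<lfloor>real (Mq P) * min x (Bm P) / Bm P\<rfloor> + 1) (int (Mq P))
           \<le> min (\<lfloor>real (Mq P) * min y (Bm P) / Bm P\<rfloor> + 1) (int (Mq P))"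
    using floor_mono by (metis add_right_mono min.mono order_refl)
  then show "quant P x \<le> quant P y"
    unfolding quant_def using assms by (intro divide_right_mono mult_right_mono) auto
qed

lemma quant_in_energy_levels:
  assumes "Bm P > 0" and "Mq P > 0" and "0 \<le> z"
  shows "quant P z \<in> energy_levels P"
proof -
  define j where "j = min (\<lfloor>real (Mq P) * min z (Bm P) / Bm P\<rfloor> + 1) (int (Mq P))"
  have "0 \<le> \<lfloor>real (Mq P) * min z (Bm P) / Bm P\<rfloor>"
    using assms by simp
  then have "1 \<le> j" and "j \<le> int (Mq P)"
    using assms(2) unfolding j_def by auto
  then have "nat j \<in> {1..Mq P}" by auto
  moreover have "quant P z = (2 * real (nat j) - 1) * Bm P / (2 * real (Mq P))"
    unfolding quant_def j_def[symmetric] using \<open>1 \<le> j\<close> by simp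
  ultimately show ?thesis unfolding energy_levels_def by blast
qed

lemma cost_indep_energy: "cost P (e1, g, h) \<alpha> = cost P (e2, g, h) \<alpha>"
  by (simp add: cost_def cost0_def pinvG_def)

lemma finite_actions: "finite (actions P s)"
  and zero_in_actions: "0 \<in> actions P s"
  unfolding actions_def by auto

lemma actions_mono_energy:
  assumes "tau P > 0" and "e1 \<le> e2"
  shows "actions P (e1, g, h) \<subseteq> actions P (e2, g, h)"
proof -
  have "e1 / tau P \<le> e2 / tau P" using assms by (simp add: divide_right_mono)
  then show ?thesis unfolding actions_def pinvH_def by auto
qed

lemma energy_after_action_nonneg:
  assumes "tau P > 0" and "0 < fst s" and "\<alpha> \<in> actions P s"
  shows "0 \<le> fst s - \<alpha> * pinvH P s * tau P"
proof (cases "\<alpha> = 0")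
  case False
  then have "\<alpha> = 1" and "pinvH P s \<le> fst s / tau P"
    using assms(3) unfolding actions_def by (auto split: if_splits)
  then show ?thesis using assms(1) by (simp add: pos_le_divide_eq)
qed (use assms in simp)

lemma sets_EH_dist: "sets (EH_dist P) = sets borel"
  unfolding EH_dist_def by simp

lemma finite_measure_EH_dist:
  assumes "fE P \<in> borel_measurable borel" and "(\<integral>\<^sup>+ y. ennreal (fE P y) \<partial>lborel) = 1"
  shows "finite_measure (EH_dist P)"
proof (rule finite_measureI)
  show "emeasure (EH_dist P) (space (EH_dist P)) \<noteq> \<infinity>"
    using assms unfolding EH_dist_def by (subst emeasure_density) auto
qed

lemma AE_EH_dist_nonneg:
  assumes "fE P \<in> borel_measurable borel" and "\<And>y. y \<notin> {0..Em P} \<Longrightarrow> fE P y = 0"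
  shows "AE y in EH_dist P. 0 \<le> y"
  unfolding EH_dist_def
proof (subst AE_density)
  show "(\<lambda>y. ennreal (fE P y)) \<in> borel_measurable lborel"
    using assms(1) by measurable
  show "AE y in lborel. 0 < ennreal (fE P y) \<longrightarrow> 0 \<le> y"
  proof (intro AE_I2 impI)
    fix y :: real
    assume "0 < ennreal (fE P y)"
    then show "0 \<le> y" using assms(2)[of y] by (cases "0 \<le> y") auto
  qed
qed

lemma expected_next_value_eq:
  "(\<Sum>s'\<in>states P. trans P s \<alpha> s' * V s') =
     (\<Sum>g'\<in>channel_levels P. \<Sum>h'\<in>channel_levels P. \<Sum>e'\<in>energy_levels P.
        measure (EH_dist P) {y. quant P (fst s - \<alpha> * pinvH P s * tau P + y) = e'} * V (e', g', h'))
     / real (Kc P) ^ 2"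
proof -
  have "(\<Sum>s'\<in>states P. trans P s \<alpha> s' * V s') =
        (\<Sum>e'\<in>energy_levels P. \<Sum>g'\<in>channel_levels P. \<Sum>h'\<in>channel_levels P.
           trans P s \<alpha> (e', g', h') * V (e', g', h'))"
    unfolding states_def by (simp add: sum.cartesian_product)
  also have "\<dots> = (\<Sum>g'\<in>channel_levels P. \<Sum>h'\<in>channel_levels P. \<Sum>e'\<in>energy_levels P.
           trans P s \<alpha> (e', g', h') * V (e', g', h'))"
    by (subst sum.swap) (simp add: sum.swap[where A = "energy_levels P"])
  finally show ?thesis
    by (simp add: trans_def sum_divide_distrib)
qed

lemma expected_next_value_antimono:
  assumes "finite_measure (EH_dist P)" and "AE y in EH_dist P. 0 \<le> y"
    and "Bm P > 0" and "Mq P > 0"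
    and "\<And>a b g' h'. a \<in> energy_levels P \<Longrightarrow> b \<in> energy_levels P \<Longrightarrow> a \<le> b \<Longrightarrow>
           V (b, g', h') \<le> V (a, g', h')"
    and "0 \<le> e1 - \<alpha> * pinvH P (e1, g, h) * tau P" and "e1 \<le> e2"
  shows "(\<Sum>s'\<in>states P. trans P (e2, g, h) \<alpha> s' * V s')
           \<le> (\<Sum>s'\<in>states P. trans P (e1, g, h) \<alpha> s' * V s')"
proof -
  define A where "A x g' h' =
    (\<Sum>e'\<in>energy_levels P. measure (EH_dist P) {y. quant P (x + y) = e'} * V (e', g', h'))"
    for x g' h'
  have shifted: "A x2 g' h' \<le> A x1 g' h'" if "0 \<le> x1" and "x1 \<le> x2" for x1 x2 g' h'
    unfolding A_def using that assms(5) quant_in_energy_levels[OF assms(3,4)]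
    by (intro expected_antitone_of_shifted_quantizer[OF assms(1) sets_EH_dist assms(2)
          finite_energy_levels borel_measurable_quant mono_quant[OF assms(3)]]) auto
  have residual_le: "e1 - \<alpha> * pinvH P (e1, g, h) * tau P \<le> e2 - \<alpha> * pinvH P (e2, g, h) * tau P"
    using assms(7) by (simp add: pinvH_def)
  have "(\<Sum>g'\<in>channel_levels P. \<Sum>h'\<in>channel_levels P. A (e2 - \<alpha> * pinvH P (e2, g, h) * tau P) g' h')
      \<le> (\<Sum>g'\<in>channel_levels P. \<Sum>h'\<in>channel_levels P. A (e1 - \<alpha> * pinvH P (e1, g, h) * tau P) g' h')"
    by (intro sum_mono shifted assms(6) residual_le)
  then show ?thesis
    unfolding expected_next_value_eq fst_conv A_def by (rule divide_right_mono) simp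
qed

lemma Vk_antimono_energy:
  assumes "finite_measure (EH_dist P)" and "AE y in EH_dist P. 0 \<le> y"
    and "Bm P > 0" and "Mq P > 0" and "tau P > 0"
    and "e1 \<in> energy_levels P" and "e2 \<in> energy_levels P" and "e1 \<le> e2"
  shows "Vk P k (e2, g, h) \<le> Vk P k (e1, g, h)"
  using assms(6-8)
proof (induction k arbitrary: e1 e2 g h)
  case 0
  have "cost P (e2, g, h) \<alpha> \<le> cost P (e1, g, h) \<alpha>" for \<alpha>
    using cost_indep_energy[of P e2 g h \<alpha> e1] by simp
  then show ?case
    unfolding Vk.simps using zero_in_actions[of P "(e1, g, h)"]
    by (intro Min_image_antimono finite_actions actions_mono_energy[OF assms(5) 0(3)]) auto
next
  case (Suc k)
  show ?case
    unfolding Vk.simps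
  proof (intro Min_image_antimono finite_actions actions_mono_energy[OF assms(5)])
    show "actions P (e1, g, h) \<noteq> {}" using zero_in_actions by blast
    fix \<alpha>
    assume "\<alpha> \<in> actions P (e1, g, h)"
    then have "0 \<le> e1 - \<alpha> * pinvH P (e1, g, h) * tau P"
      using energy_after_action_nonneg[OF assms(5)] energy_levels_pos[OF assms(3) Suc.prems(1)]
      by fastforce
    from expected_next_value_antimono[where V = "Vk P k", OF assms(1-4) Suc.IH this Suc.prems(3)]
    show "cost P (e2, g, h) \<alpha> + (\<Sum>s'\<in>states P. trans P (e2, g, h) \<alpha> s' * Vk P k s')
        \<le> cost P (e1, g, h) \<alpha> + (\<Sum>s'\<in>states P. trans P (e1, g, h) \<alpha> s' * Vk P k s')"
      using cost_indep_energy[of P e2 g h \<alpha> e1] by linarith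
  qed (use Suc.prems in auto)
qed

theorem lemma3:
  fixes P :: params and N :: nat
  assumes "Bm P > 0" and "Mq P > 0" and "Kc P > 0"
    and "0 < Hl P 1" and "\<And>k. 1 \<le> k \<Longrightarrow> k < Kc P \<Longrightarrow> Hl P k < Hl P (Suc k)"
    and "Rr P > 0" and "Ww P > 0" and "sigma2 P > 0" and "g0 P > 0" and "theta P > 0"
    and "dG P > 0" and "dH P > 0" and "pGmax P > 0" and "pHmax P > 0"
    and "wG P > 0" and "wD P > 0" and "tau P > 0" and "Em P > 0"
    and "fE P \<in> borel_measurable borel"
    and "\<And>y. 0 \<le> fE P y"
    and "\<And>y. y \<notin> {0..Em P} \<Longrightarrow> fE P y = 0"
    and "(\<integral>\<^sup>+ y. ennreal (fE P y) \<partial>lborel) = 1"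
  shows "\<forall>i\<in>{1..N}. \<forall>\<epsilon>1\<in>energy_levels P. \<forall>\<epsilon>2\<in>energy_levels P.
           \<epsilon>1 \<le> \<epsilon>2 \<longrightarrow> uhat P N i \<epsilon>2 \<le> uhat P N i \<epsilon>1"
proof (intro ballI impI)
  \<comment> \<open>Only the quantizer, the block length and the law of E_H enter; the channel and cost
    parameters are irrelevant to monotonicity.\<close>
  fix i \<epsilon>1 \<epsilon>2
  assume "\<epsilon>1 \<in> energy_levels P" and "\<epsilon>2 \<in> energy_levels P" and "\<epsilon>1 \<le> \<epsilon>2"
  with Vk_antimono_energy[OF finite_measure_EH_dist[OF assms(19,22)] AE_EH_dist_nonneg[OF assms(19,21)]
      assms(1,2,17)]
  show "uhat P N i \<epsilon>2 \<le> uhat P N i \<epsilon>1"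
    unfolding uhat_def ustar_def by (intro sum_mono) blast
qed

end
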